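(* Let $n,m\ge 2$, let $2\le r\le n$ and $2\le s\le m$, let $A\subseteq V(K_n)$ with $|A|=r$ and $B\subseteq V(K_m)$ with $|B|=s$. If $S$ is a total $2$-dominating set of $K_n\Box K_m$, then \[ \bigl|S\cap\bigl[(A\times V(K_m))\cup(V(K_n)\times B)\bigr]\bigr|\ge\gamma_{2t}(K_r\Box K_s). \]
   Context: For a graph $G=(V,E)$, a set $S\subseteq V$ is a total $2$-dominating set if every vertex of $V$ (including those in $S$) is adjacent to at least $2$ vertices of $S$; $\gamma_{2t}(G)$ is the minimum cardinality of such a set. $G\Box H$ denotes the Cartesian product: vertex set $V(G)\times V(H)$, with $(u_1,v_1)\sim(u_2,v_2)$ iff either $u_1=u_2$ and $v_1\sim v_2$, or $v_1=v_2$ and $u_1\sim u_2$. $K_n$ is the complete graph on $n$ vertices. *)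

theory Defs
  imports Main
begin

definition total_k_dominating :: "'a set \<Rightarrow> ('a \<Rightarrow> 'a \<Rightarrow> bool) \<Rightarrow> nat \<Rightarrow> 'a set \<Rightarrow> bool" where
  "total_k_dominating V adj k S \<longleftrightarrow>
     S \<subseteq> V \<and> (\<forall>v\<in>V. card {u\<in>S. adj v u} \<ge> k)"

definition gamma_2t :: "'a set \<Rightarrow> ('a \<Rightarrow> 'a \<Rightarrow> bool) \<Rightarrow> nat" where
  "gamma_2t V adj = (LEAST c. \<exists>S. total_k_dominating V adj 2 S \<and> card S = c)"

definition K_V :: "nat \<Rightarrow> nat set" where "K_V n = {0..<n}"
definition K_adj :: "nat \<Rightarrow> nat \<Rightarrow> bool" where "K_adj x y \<longleftrightarrow> x \<noteq> y"

definition box_V :: "'a set \<Rightarrow> 'b set \<Rightarrow> ('a \<times> 'b) set" where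
  "box_V V1 V2 = V1 \<times> V2"
definition box_adj :: "('a \<Rightarrow> 'a \<Rightarrow> bool) \<Rightarrow> ('b \<Rightarrow> 'b \<Rightarrow> bool) \<Rightarrow> 'a \<times> 'b \<Rightarrow> 'a \<times> 'b \<Rightarrow> bool" where
  "box_adj adj1 adj2 p q \<longleftrightarrow>
     (fst p = fst q \<and> adj2 (snd p) (snd q)) \<or> (snd p = snd q \<and> adj1 (fst p) (fst q))"

end

theory Submission
  imports Defs
begin

text \<open>Restricted to the rows \<open>A\<close> and columns \<open>B\<close>, the set \<open>S\<close> becomes a weighted
  configuration on the rook's graph \<open>K_r \<box> K_s\<close>: the cells \<open>S \<inter> A \<times> B\<close>, together with, for
  every row \<open>a \<in> A\<close>, the number of vertices of \<open>S\<close> in that row outside \<open>B\<close>, and symmetrically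
  for every column. The domination condition at the cells of \<open>A \<times> B\<close> only depends on these
  data, and their total weight is exactly the left-hand side. The extra weight is then moved
  into cells of \<open>A \<times> B\<close>, or discarded, without increasing the total, until either none is
  left, so that the cells form a total 2-dominating set of \<open>K_r \<box> K_s\<close>, or the total is seen
  to be at least \<open>2r\<close> or \<open>2s\<close>, the size of two full columns or two full rows.\<close>

lemma ex_other_element: "2 \<le> card A \<Longrightarrow> \<exists>x\<in>A. x \<noteq> a"
  using card_mono[of "{a}" A] by fastforce

lemma finite_Image_singleton_of_subset: "I \<subseteq> A \<times> B \<Longrightarrow> finite B \<Longrightarrow> finite (I `` {a})"
  by (blast intro: finite_subset)

lemma sum_card_Image:
  assumes "finite A" "finite I" "I \<subseteq> A \<times> UNIV"
  shows "(\<Sum>a\<in>A. card (I `` {a})) = card I"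
proof -
  have "I = Sigma A (\<lambda>a. I `` {a})" using assms(3) by auto
  then show ?thesis using assms(1,2) by (metis card_SigmaI finite_Image)
qed

lemma sum_card_Image_Diff:
  assumes "finite A" "finite S"
  shows "(\<Sum>a\<in>A. card (S `` {a} - B)) = card (S \<inter> A \<times> - B)"
proof -
  have "(\<Sum>a\<in>A. card (S `` {a} - B)) = (\<Sum>a\<in>A. card ((S \<inter> A \<times> - B) `` {a}))"
    by (intro sum.cong refl arg_cong[where f = card]) auto
  also have "\<dots> = card (S \<inter> A \<times> - B)" using assms by (intro sum_card_Image) auto
  finally show ?thesis .
qed

lemma sum_decrement:
  assumes "finite A" "K \<subseteq> A" "\<forall>x\<in>K. 0 < (R x :: nat)"
  shows "sum R A = (\<Sum>x\<in>A. if x \<in> K then R x - 1 else R x) + card K"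
proof -
  have "sum R A = (\<Sum>x\<in>A. (if x \<in> K then R x - 1 else R x) + (if x \<in> K then 1 else 0))"
    using assms(3) by (intro sum.cong) auto
  also have "\<dots> = (\<Sum>x\<in>A. if x \<in> K then R x - 1 else R x) + card K"
    using assms(1,2) by (simp add: sum.distrib sum.If_cases Int_absorb1)
  finally show ?thesis .
qed

lemma Image_map_prod_singleton:
  assumes f: "inj_on f A" and D: "D \<subseteq> A \<times> B" and x: "x \<in> A"
  shows "(map_prod f g ` D) `` {f x} = g ` (D `` {x})"
proof (intro equalityI subsetI)
  fix y assume "y \<in> (map_prod f g ` D) `` {f x}"
  then obtain u v where uv: "(u, v) \<in> D" "f u = f x" "y = g v" by auto
  then have "u = x" using D x inj_onD[OF f] by blast
  then show "y \<in> g ` (D `` {x})" using uv by auto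
qed auto

lemma card_Image_map_prod_singleton:
  assumes "bij_betw f A A'" "bij_betw g B B'" "D \<subseteq> A \<times> B" "x \<in> A"
  shows "card ((map_prod f g ` D) `` {f x}) = card (D `` {x})"
proof -
  have "D `` {x} \<subseteq> B" using assms(3) by auto
  then have "inj_on g (D `` {x})" using bij_betw_imp_inj_on[OF assms(2)] inj_on_subset by blast
  then show ?thesis
    using assms Image_map_prod_singleton[of f A D B x g] by (simp add: bij_betw_def card_image)
qed

section \<open>Weighted total 2-domination in rook's graphs\<close>

definition load :: "('a \<times> 'b) set \<Rightarrow> ('a \<Rightarrow> nat) \<Rightarrow> 'a \<Rightarrow> nat" where
  "load I R a = card (I `` {a}) + R a"

text \<open>In the rook's graph \<open>K_A \<box> K_B\<close> on \<open>A \<times> B\<close>, the cell \<open>(a, b)\<close> has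
  \<open>card (D `` {a}) + card (D\<inverse> `` {b})\<close> neighbours in \<open>D\<close>, minus 2 if it lies in \<open>D\<close> itself.
  The weights \<open>R a\<close> and \<open>C b\<close> stand for further dominators of row \<open>a\<close> and column \<open>b\<close>
  lying outside \<open>A \<times> B\<close>.\<close>

definition weighted_rook_2dom ::
    "'a set \<Rightarrow> 'b set \<Rightarrow> ('a \<times> 'b) set \<Rightarrow> ('a \<Rightarrow> nat) \<Rightarrow> ('b \<Rightarrow> nat) \<Rightarrow> bool" where
  "weighted_rook_2dom A B I R C \<longleftrightarrow> I \<subseteq> A \<times> B \<and>
     (\<forall>a\<in>A. \<forall>b\<in>B. (if (a, b) \<in> I then 4 else 2) \<le> load I R a + load (I\<inverse>) C b)"

abbreviation rook_2dom :: "'a set \<Rightarrow> 'b set \<Rightarrow> ('a \<times> 'b) set \<Rightarrow> bool" where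
  "rook_2dom A B D \<equiv> weighted_rook_2dom A B D (\<lambda>_. 0) (\<lambda>_. 0)"

definition weighted_card :: "'a set \<Rightarrow> 'b set \<Rightarrow> ('a \<times> 'b) set \<Rightarrow> ('a \<Rightarrow> nat) \<Rightarrow> ('b \<Rightarrow> nat) \<Rightarrow> nat" where
  "weighted_card A B I R C = card I + sum R A + sum C B"

lemma weighted_rook_2domD:
  "weighted_rook_2dom A B I R C \<Longrightarrow> a \<in> A \<Longrightarrow> b \<in> B \<Longrightarrow>
     (if (a, b) \<in> I then 4 else 2) \<le> load I R a + load (I\<inverse>) C b"
  unfolding weighted_rook_2dom_def by blast

lemma weighted_rook_2dom_subset: "weighted_rook_2dom A B I R C \<Longrightarrow> I \<subseteq> A \<times> B"
  unfolding weighted_rook_2dom_def by blast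

lemma weighted_rook_2dom_converse:
  "weighted_rook_2dom B A (I\<inverse>) C R \<longleftrightarrow> weighted_rook_2dom A B I R C"
  unfolding weighted_rook_2dom_def by (auto simp: add.commute)

lemma weighted_card_converse: "weighted_card B A (I\<inverse>) C R = weighted_card A B I R C"
  unfolding weighted_card_def by simp

lemma sum_load:
  assumes "finite A" "finite B" "I \<subseteq> A \<times> B"
  shows "sum (load I R) A = card I + sum R A"
proof -
  have "finite I" using assms by (metis finite_SigmaI finite_subset)
  moreover have "I \<subseteq> A \<times> UNIV" using assms(3) by auto
  ultimately show ?thesis using assms(1) unfolding load_def by (simp add: sum.distrib sum_card_Image)
qed

lemma sum_load_le_weighted_card:
  assumes "weighted_rook_2dom A B I R C" "finite A" "finite B"
  shows "sum (load I R) A \<le> weighted_card A B I R C"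
  using sum_load[OF assms(2,3) weighted_rook_2dom_subset[OF assms(1)]]
  unfolding weighted_card_def by simp

lemma double_card_le_weighted_card:
  assumes "weighted_rook_2dom A B I R C" "finite A" "finite B" "\<forall>a\<in>A. 2 \<le> load I R a"
  shows "2 * card A \<le> weighted_card A B I R C"
proof -
  have "2 * card A \<le> sum (load I R) A"
    using sum_mono[of A "\<lambda>_. 2" "load I R"] assms(4) by (simp add: mult.commute)
  with sum_load_le_weighted_card[OF assms(1-3)] show ?thesis by linarith
qed

text \<open>A row without dominators forces every column to carry two of them.\<close>

lemma double_card_le_weighted_card_if_load_zero:
  assumes good: "weighted_rook_2dom A B I R C" and fin: "finite A" "finite B"
    and a: "a \<in> A" "load I R a = 0"
  shows "2 * card B \<le> weighted_card A B I R C"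
proof -
  have "finite (I `` {a})"
    using weighted_rook_2dom_subset[OF good] fin by (blast intro: finite_subset)
  with a have "(a, b) \<notin> I" for b by (auto simp: load_def)
  then have "\<forall>b\<in>B. 2 \<le> load (I\<inverse>) C b"
    using weighted_rook_2domD[OF good a(1)] a(2) by fastforce
  then show ?thesis
    using double_card_le_weighted_card[of B A "I\<inverse>" C R] good fin
    by (simp add: weighted_rook_2dom_converse weighted_card_converse)
qed

definition rook_2dom_within :: "'a set \<Rightarrow> 'b set \<Rightarrow> nat \<Rightarrow> bool" where
  "rook_2dom_within A B t \<longleftrightarrow> (\<exists>D. rook_2dom A B D \<and> card D \<le> t)"

lemma rook_2dom_within_mono: "rook_2dom_within A B t \<Longrightarrow> t \<le> u \<Longrightarrow> rook_2dom_within A B u"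
  unfolding rook_2dom_within_def by fastforce

lemma rook_2dom_within_converse: "rook_2dom_within B A t \<Longrightarrow> rook_2dom_within A B t"
  unfolding rook_2dom_within_def
  by (metis card_inverse converse_converse weighted_rook_2dom_converse)

lemma rook_2dom_two_columns:
  assumes "finite A" "2 \<le> card A" "b\<^sub>1 \<in> B" "b\<^sub>2 \<in> B" "b\<^sub>1 \<noteq> b\<^sub>2"
  shows "rook_2dom A B (A \<times> {b\<^sub>1, b\<^sub>2})"
  unfolding weighted_rook_2dom_def
proof (intro conjI ballI)
  show "A \<times> {b\<^sub>1, b\<^sub>2} \<subseteq> A \<times> B" using assms by auto
  fix a b assume ab: "a \<in> A" "b \<in> B"
  have row: "(A \<times> {b\<^sub>1, b\<^sub>2}) `` {a} = {b\<^sub>1, b\<^sub>2}" using ab by auto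
  have col: "(A \<times> {b\<^sub>1, b\<^sub>2})\<inverse> `` {b} = (if b \<in> {b\<^sub>1, b\<^sub>2} then A else {})" by auto
  show "(if (a, b) \<in> A \<times> {b\<^sub>1, b\<^sub>2} then 4 else 2)
      \<le> load (A \<times> {b\<^sub>1, b\<^sub>2}) (\<lambda>_. 0) a + load ((A \<times> {b\<^sub>1, b\<^sub>2})\<inverse>) (\<lambda>_. 0) b"
    using assms ab unfolding load_def row col by auto
qed

lemma rook_2dom_within_double_card_rows:
  assumes "finite A" "finite B" "2 \<le> card A" "2 \<le> card B" "2 * card A \<le> t"
  shows "rook_2dom_within A B t"
proof -
  obtain b\<^sub>1 where "b\<^sub>1 \<in> B" using assms(4) by fastforce
  moreover obtain b\<^sub>2 where "b\<^sub>2 \<in> B" "b\<^sub>2 \<noteq> b\<^sub>1" using ex_other_element[OF assms(4)] by blast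
  ultimately have b: "b\<^sub>1 \<in> B" "b\<^sub>2 \<in> B" "b\<^sub>1 \<noteq> b\<^sub>2" by auto
  have "card (A \<times> {b\<^sub>1, b\<^sub>2}) = 2 * card A" using b by (simp add: card_cartesian_product)
  then show ?thesis
    using rook_2dom_two_columns[OF assms(1,3) b] assms(5) unfolding rook_2dom_within_def by auto
qed

lemma rook_2dom_within_double_card_columns:
  "finite A \<Longrightarrow> finite B \<Longrightarrow> 2 \<le> card A \<Longrightarrow> 2 \<le> card B \<Longrightarrow> 2 * card B \<le> t \<Longrightarrow>
     rook_2dom_within A B t"
  by (rule rook_2dom_within_converse) (rule rook_2dom_within_double_card_rows)

definition excess_reducible ::
    "'a set \<Rightarrow> 'b set \<Rightarrow> ('a \<times> 'b) set \<Rightarrow> ('a \<Rightarrow> nat) \<Rightarrow> ('b \<Rightarrow> nat) \<Rightarrow> bool" where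
  "excess_reducible A B I R C \<longleftrightarrow> (\<exists>I' R' C'. weighted_rook_2dom A B I' R' C' \<and>
     sum R' A + sum C' B < sum R A + sum C B \<and> weighted_card A B I' R' C' \<le> weighted_card A B I R C)"

lemma excess_reducible_converse:
  "excess_reducible B A (I\<inverse>) C R \<Longrightarrow> excess_reducible A B I R C"
  unfolding excess_reducible_def
  by (metis add.commute converse_converse weighted_card_converse weighted_rook_2dom_converse)

text \<open>Moving one unit of weight from each row of \<open>K\<close> onto the cell of that row in column \<open>b\<close>
  keeps every row load and raises the load of column \<open>b\<close> by \<open>card K\<close>.\<close>

lemma weighted_rook_2dom_move_rows:
  assumes good: "weighted_rook_2dom A B I R C" and fin: "finite A" "finite B"
    and b: "b \<in> B" and K: "K \<subseteq> A" "\<forall>x\<in>K. (x, b) \<notin> I \<and> 0 < R x"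
    and enough: "\<forall>x\<in>K. 4 \<le> load I R x + load (I\<inverse>) C b + card K"
  shows "weighted_rook_2dom A B (I \<union> K \<times> {b}) (\<lambda>x. if x \<in> K then R x - 1 else R x) C"
    (is "weighted_rook_2dom A B ?I ?R C")
proof -
  have sub: "I \<subseteq> A \<times> B" using weighted_rook_2dom_subset[OF good] .
  have row: "load ?I ?R x = load I R x" for x
  proof (cases "x \<in> K")
    case True
    then have "?I `` {x} = insert b (I `` {x})" "b \<notin> I `` {x}" using K by auto
    then show ?thesis using True K finite_Image_singleton_of_subset[OF sub fin(2)]
      by (simp add: load_def)
  next
    case False
    then have "?I `` {x} = I `` {x}" by auto
    then show ?thesis using False by (simp add: load_def)
  qed
  have col: "load (I\<inverse>) C y \<le> load (?I\<inverse>) C y" for y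
  proof -
    have "?I\<inverse> \<subseteq> B \<times> A" using sub K b by auto
    then show ?thesis
      using finite_Image_singleton_of_subset[of "?I\<inverse>" B A] fin
      unfolding load_def by (intro add_mono card_mono) auto
  qed
  have col_b: "load (?I\<inverse>) C b = load (I\<inverse>) C b + card K"
  proof -
    have "?I\<inverse> `` {b} = I\<inverse> `` {b} \<union> K" "I\<inverse> `` {b} \<inter> K = {}" using K by auto
    moreover have "finite (I\<inverse> `` {b})" "finite K"
      using finite_Image_singleton_of_subset[of "I\<inverse>" B A] sub fin K finite_subset by auto
    ultimately show ?thesis by (simp add: load_def card_Un_disjoint)
  qed
  show ?thesis
    unfolding weighted_rook_2dom_def
  proof (intro conjI ballI)
    show "?I \<subseteq> A \<times> B" using sub K b by auto
    fix x y assume xy: "x \<in> A" "y \<in> B"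
    show "(if (x, y) \<in> ?I then 4 else 2) \<le> load ?I ?R x + load (?I\<inverse>) C y"
    proof (cases "(x, y) \<in> I \<or> (x, y) \<notin> ?I")
      case True
      then show ?thesis using weighted_rook_2domD[OF good xy] row[of x] col[of y] by auto
    next
      case False
      then have "x \<in> K" "y = b" by auto
      then show ?thesis using enough row[of x] col_b by auto
    qed
  qed
qed

lemma excess_reducible_move_rows:
  assumes good: "weighted_rook_2dom A B I R C" and fin: "finite A" "finite B"
    and b: "b \<in> B" and K: "K \<subseteq> A" "K \<noteq> {}" "\<forall>x\<in>K. (x, b) \<notin> I \<and> 0 < R x"
    and enough: "\<forall>x\<in>K. 4 \<le> load I R x + load (I\<inverse>) C b + card K"
  shows "excess_reducible A B I R C"
proof -
  let ?I = "I \<union> K \<times> {b}" and ?R = "\<lambda>x. if x \<in> K then R x - 1 else R x"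
  have fK: "finite K" using K(1) fin(1) finite_subset by blast
  have R: "sum R A = sum ?R A + card K" using sum_decrement[OF fin(1) K(1)] K(3) by blast
  have "card ?I = card I + card K"
  proof -
    have "finite I"
      using weighted_rook_2dom_subset[OF good] fin finite_subset by (metis finite_SigmaI)
    moreover have "I \<inter> K \<times> {b} = {}" using K(3) by auto
    ultimately show ?thesis using fK by (simp add: card_Un_disjoint card_cartesian_product)
  qed
  then have "weighted_card A B ?I ?R C = weighted_card A B I R C"
    unfolding weighted_card_def using R by simp
  moreover have "card K > 0" using fK K(2) by (simp add: card_gt_0_iff)
  ultimately show ?thesis
    unfolding excess_reducible_def using R weighted_rook_2dom_move_rows[OF good fin b K(1,3) enough]
    by (metis add_less_mono1 le_refl less_add_same_cancel1)
qed

lemma weighted_rook_2dom_drop_full_row: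
  assumes good: "weighted_rook_2dom A B I R C" and fin: "finite A" "finite B"
    and a: "a \<in> A" "0 < R a" "I `` {a} = B" "3 \<le> card B"
  shows "weighted_rook_2dom A B I (\<lambda>x. if x \<in> {a} then R x - 1 else R x) C"
  unfolding weighted_rook_2dom_def
proof (intro conjI ballI)
  show "I \<subseteq> A \<times> B" using weighted_rook_2dom_subset[OF good] .
  fix x y assume xy: "x \<in> A" "y \<in> B"
  show "(if (x, y) \<in> I then 4 else 2)
      \<le> load I (\<lambda>x. if x \<in> {a} then R x - 1 else R x) x + load (I\<inverse>) C y"
  proof (cases "x = a")
    case True
    have "a \<in> I\<inverse> `` {y}" using a(3) xy(2) by auto
    moreover have "finite (I\<inverse> `` {y})"
      using finite_Image_singleton_of_subset[of "I\<inverse>" B A] weighted_rook_2dom_subset[OF good] fin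
      by auto
    ultimately have "1 \<le> card (I\<inverse> `` {y})" by (metis One_nat_def Suc_leI card_gt_0_iff empty_iff)
    then show ?thesis using True a by (auto simp: load_def)
  next
    case False
    then show ?thesis using weighted_rook_2domD[OF good xy] by (simp add: load_def)
  qed
qed

lemma excess_reducible_full_row:
  assumes good: "weighted_rook_2dom A B I R C" and fin: "finite A" "finite B"
    and a: "a \<in> A" "0 < R a" "I `` {a} = B" "3 \<le> card B"
  shows "excess_reducible A B I R C"
proof -
  have "sum R A = (\<Sum>x\<in>A. if x \<in> {a} then R x - 1 else R x) + 1"
    using sum_decrement[of A "{a}" R] fin(1) a(1,2) by simp
  then show ?thesis
    unfolding excess_reducible_def weighted_card_def
    using weighted_rook_2dom_drop_full_row[OF good fin a] by fastforce
qed

lemma double_card_le_weighted_card_full_row: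
  assumes good: "weighted_rook_2dom A B I R C" and fin: "finite A" "finite B"
    and A: "2 \<le> card A" and a: "a \<in> A" "0 < R a" "I `` {a} = B" and B: "card B = 2"
  shows "2 * card B \<le> weighted_card A B I R C"
proof -
  obtain x where x: "x \<in> A" "x \<noteq> a" using ex_other_element[OF A] by blast
  show ?thesis
  proof (cases "load I R x = 0")
    case True
    then show ?thesis using double_card_le_weighted_card_if_load_zero[OF good fin x(1)] by blast
  next
    case False
    have "load I R a + load I R x \<le> sum (load I R) A"
      using sum_mono2[OF fin(1), of "{a, x}" "load I R"] a(1) x by simp
    moreover have "load I R a = 2 + R a" using a(3) B by (simp add: load_def)
    ultimately show ?thesis
      using sum_load_le_weighted_card[OF good fin] False a(2) B by linarith
  qed
qed

text \<open>If every column carries exactly one unit, occupied rows have load at least 3 and the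
  unoccupied rows \<open>K\<close> carry their load as weight; two or more of them can be moved together
  into a single column, while at most one of them already forces total weight \<open>2 * card A\<close>.\<close>

lemma excess_reducible_or_double_card_le_if_unit_columns:
  assumes good: "weighted_rook_2dom A B I R C" and fin: "finite A" "finite B"
    and A: "2 \<le> card A" and b: "b \<in> B" and cols: "\<forall>y\<in>B. load (I\<inverse>) C y = 1"
  shows "excess_reducible A B I R C \<or> 2 * card A \<le> weighted_card A B I R C"
proof -
  define K where "K = {x\<in>A. I `` {x} = {}}"
  have KA: "K \<subseteq> A" unfolding K_def by auto
  have unoccupied: "(x, b) \<notin> I \<and> 1 \<le> R x \<and> load I R x = R x" if "x \<in> K" for x
  proof -
    have "(x, b) \<notin> I" "load I R x = R x" using that unfolding K_def load_def by auto
    then show ?thesis using weighted_rook_2domD[OF good _ b, of x] that cols b KA by auto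
  qed
  have occupied: "3 \<le> load I R x" if x: "x \<in> A" "x \<notin> K" for x
  proof -
    obtain y where "(x, y) \<in> I" using x unfolding K_def by auto
    moreover have "y \<in> B" using calculation weighted_rook_2dom_subset[OF good] by auto
    ultimately show ?thesis using weighted_rook_2domD[OF good x(1)] cols by fastforce
  qed
  show ?thesis
  proof (cases "2 \<le> card K")
    case True
    then have "K \<noteq> {}" by auto
    moreover have "\<forall>x\<in>K. 4 \<le> load I R x + load (I\<inverse>) C b + card K"
      using unoccupied cols b True by fastforce
    ultimately have "excess_reducible A B I R C"
      using excess_reducible_move_rows[OF good fin b KA] unoccupied by fastforce
    then show ?thesis ..
  next
    case False
    have "(\<Sum>x\<in>A. if x \<in> K then 1 else 3) \<le> sum (load I R) A"
      using unoccupied occupied by (intro sum_mono) fastforce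
    moreover have "(\<Sum>x\<in>A. if x \<in> K then 1 else 3 :: nat) = card K + 3 * (card A - card K)"
      using fin(1) KA by (simp add: sum.If_cases Int_absorb1 Diff_eq[symmetric] card_Diff_subset
          finite_subset)
    ultimately have "2 * card A \<le> sum (load I R) A" using False A by linarith
    then show ?thesis using sum_load_le_weighted_card[OF good fin] by linarith
  qed
qed

lemma excess_reducible_or_double_card_le_if_tight_row:
  assumes good: "weighted_rook_2dom A B I R C" and fin: "finite A" "finite B"
    and A: "2 \<le> card A" and a: "a \<in> A" "0 < R a" and b: "b \<in> B" "(a, b) \<notin> I"
    and tight: "\<forall>y\<in>B. (a, y) \<notin> I \<longrightarrow> load I R a + load (I\<inverse>) C y = 2"
  shows "excess_reducible A B I R C \<or> 2 * card A \<le> weighted_card A B I R C"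
proof -
  have "1 \<le> load I R a" using a(2) by (simp add: load_def)
  then consider "load (I\<inverse>) C b = 0" | "load I R a = 1" using tight b by force
  then show ?thesis
  proof cases
    case 1
    then show ?thesis
      using double_card_le_weighted_card_if_load_zero[of B A "I\<inverse>" C R b] good fin b(1)
      by (simp add: weighted_rook_2dom_converse weighted_card_converse)
  next
    case 2
    then have "card (I `` {a}) = 0" using a(2) by (simp add: load_def)
    then have "I `` {a} = {}"
      using finite_Image_singleton_of_subset[OF weighted_rook_2dom_subset[OF good] fin(2)] by simp
    then have "\<forall>y\<in>B. load (I\<inverse>) C y = 1" using tight 2 by auto
    then show ?thesis using excess_reducible_or_double_card_le_if_unit_columns[OF good fin A b(1)] by blast
  qed
qed

lemma excess_reducible_or_rook_2dom_within_if_row_weight: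
  assumes good: "weighted_rook_2dom A B I R C" and fin: "finite A" "finite B"
    and A: "2 \<le> card A" and B: "2 \<le> card B" and a: "a \<in> A" "0 < R a"
  shows "excess_reducible A B I R C \<or> rook_2dom_within A B (weighted_card A B I R C)"
proof -
  let ?T = "weighted_card A B I R C"
  have sub: "I \<subseteq> A \<times> B" using weighted_rook_2dom_subset[OF good] .
  have within_if: "2 * card A \<le> ?T \<or> 2 * card B \<le> ?T \<Longrightarrow> rook_2dom_within A B ?T"
    using rook_2dom_within_double_card_rows[OF fin A B] rook_2dom_within_double_card_columns[OF fin A B]
    by blast
  consider (movable) b where "b \<in> B" "(a, b) \<notin> I" "3 \<le> load I R a + load (I\<inverse>) C b"
    | (full) "I `` {a} = B"
    | (tight) b where "b \<in> B" "(a, b) \<notin> I"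
        "\<forall>y\<in>B. (a, y) \<notin> I \<longrightarrow> load I R a + load (I\<inverse>) C y = 2"
    using weighted_rook_2domD[OF good a(1)] sub by (fastforce simp: not_le)
  then show ?thesis
  proof cases
    case movable
    then have "excess_reducible A B I R C"
      using excess_reducible_move_rows[OF good fin movable(1), of "{a}"] a by simp
    then show ?thesis ..
  next
    case full
    then show ?thesis
      using excess_reducible_full_row[OF good fin a full] within_if
        double_card_le_weighted_card_full_row[OF good fin A a full] B by force
  next
    case tight
    then show ?thesis
      using excess_reducible_or_double_card_le_if_tight_row[OF good fin A a tight] within_if by blast
  qed
qed

lemma excess_reducible_or_rook_2dom_within:
  assumes good: "weighted_rook_2dom A B I R C" and fin: "finite A" "finite B"
    and A: "2 \<le> card A" and B: "2 \<le> card B" and excess: "0 < sum R A + sum C B"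
  shows "excess_reducible A B I R C \<or> rook_2dom_within A B (weighted_card A B I R C)"
proof -
  have "\<not> (\<forall>a\<in>A. R a = 0) \<or> \<not> (\<forall>b\<in>B. C b = 0)" using excess by (auto simp: sum.neutral)
  then consider (row) a where "a \<in> A" "0 < R a" | (column) b where "b \<in> B" "0 < C b" by blast
  then show ?thesis
  proof cases
    case row
    then show ?thesis using excess_reducible_or_rook_2dom_within_if_row_weight[OF good fin A B] by blast
  next
    case column
    then show ?thesis
      using excess_reducible_or_rook_2dom_within_if_row_weight[of B A "I\<inverse>" C R b] good fin A B
      by (auto simp: weighted_rook_2dom_converse weighted_card_converse
          intro: excess_reducible_converse rook_2dom_within_converse)
  qed
qed

lemma rook_2dom_within_weighted_card:
  assumes "weighted_rook_2dom A B I R C" "finite A" "finite B" "2 \<le> card A" "2 \<le> card B"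
  shows "rook_2dom_within A B (weighted_card A B I R C)"
  using assms
proof (induction "sum R A + sum C B" arbitrary: I R C rule: less_induct)
  case less
  show ?case
  proof (cases "sum R A + sum C B = 0")
    case True
    then have "\<forall>a\<in>A. R a = 0" "\<forall>b\<in>B. C b = 0" using less.prems(2,3) by auto
    then have "rook_2dom A B I"
      using less.prems(1) unfolding weighted_rook_2dom_def load_def by auto
    then show ?thesis unfolding rook_2dom_within_def weighted_card_def by auto
  next
    case False
    have "rook_2dom_within A B (weighted_card A B I R C)" if red: "excess_reducible A B I R C"
    proof -
      obtain I' R' C' where "weighted_rook_2dom A B I' R' C'"
        "sum R' A + sum C' B < sum R A + sum C B"
        "weighted_card A B I' R' C' \<le> weighted_card A B I R C"
        using red unfolding excess_reducible_def by blast
      then show ?thesis using less.hyps less.prems(2-5) rook_2dom_within_mono by blast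
    qed
    then show ?thesis using excess_reducible_or_rook_2dom_within[OF less.prems] False by auto
  qed
qed

section \<open>Cartesian products of complete graphs\<close>

lemma card_box_K_neighbours:
  assumes "finite S"
  shows "card {u \<in> S. box_adj K_adj K_adj (a, b) u} = card (S `` {a} - {b}) + card (S\<inverse> `` {b} - {a})"
proof -
  have "{u \<in> S. box_adj K_adj K_adj (a, b) u} = Pair a ` (S `` {a} - {b}) \<union> (\<lambda>x. (x, b)) ` (S\<inverse> `` {b} - {a})"
    unfolding box_adj_def K_adj_def by auto
  also have "card \<dots> = card (Pair a ` (S `` {a} - {b})) + card ((\<lambda>x. (x, b)) ` (S\<inverse> `` {b} - {a}))"
    using assms by (intro card_Un_disjoint) auto
  also have "\<dots> = card (S `` {a} - {b}) + card (S\<inverse> `` {b} - {a})"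
    by (simp add: card_image inj_on_def)
  finally show ?thesis .
qed

lemma total_2dom_box_K_iff_rook_2dom:
  assumes "finite X" "finite Y"
  shows "total_k_dominating (box_V X Y) (box_adj K_adj K_adj) 2 S \<longleftrightarrow> rook_2dom X Y S"
proof (cases "S \<subseteq> X \<times> Y")
  case True
  then have "finite S" using assms by (metis finite_SigmaI finite_subset)
  then have "finite (S `` {a})" "finite (S\<inverse> `` {b})" for a b by auto
  then have "2 \<le> card {u \<in> S. box_adj K_adj K_adj (a, b) u} \<longleftrightarrow>
      (if (a, b) \<in> S then 4 else 2) \<le> card (S `` {a}) + card (S\<inverse> `` {b})" for a b
    using card_box_K_neighbours[OF \<open>finite S\<close>, of a b] card_gt_0_iff[of "S `` {a}"]
      card_gt_0_iff[of "S\<inverse> `` {b}"]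
    by (auto simp: card_Diff_singleton_if)
  then show ?thesis
    using True unfolding total_k_dominating_def weighted_rook_2dom_def box_V_def load_def by auto
qed (auto simp: total_k_dominating_def weighted_rook_2dom_def box_V_def)

lemma rook_2dom_map_prod:
  assumes D: "rook_2dom A B D" and f: "bij_betw f A A'" and g: "bij_betw g B B'"
  shows "rook_2dom A' B' (map_prod f g ` D)"
  unfolding weighted_rook_2dom_def
proof (intro conjI ballI)
  have sub: "D \<subseteq> A \<times> B" using weighted_rook_2dom_subset[OF D] .
  then show "map_prod f g ` D \<subseteq> A' \<times> B'" using f g by (auto simp: bij_betw_def)
  fix x' y' assume "x' \<in> A'" "y' \<in> B'"
  then obtain x y where xy: "x \<in> A" "y \<in> B" "x' = f x" "y' = g y"
    using f g by (auto simp: bij_betw_def)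
  have "inj_on (map_prod f g) (A \<times> B)"
    using f g by (simp add: bij_betw_def map_prod_inj_on)
  then have mem: "(f x, g y) \<in> map_prod f g ` D \<longleftrightarrow> (x, y) \<in> D"
    using sub xy(1,2) inj_on_image_mem_iff[of "map_prod f g" "A \<times> B" "(x, y)" D] by simp
  have "(map_prod f g ` D)\<inverse> = map_prod g f ` D\<inverse>" by auto
  then have "card ((map_prod f g ` D)\<inverse> `` {g y}) = card (D\<inverse> `` {y})"
    using card_Image_map_prod_singleton[OF g f _ xy(2), of "D\<inverse>"] sub by auto
  then show "(if (x', y') \<in> map_prod f g ` D then 4 else 2)
      \<le> load (map_prod f g ` D) (\<lambda>_. 0) x' + load ((map_prod f g ` D)\<inverse>) (\<lambda>_. 0) y'"
    using weighted_rook_2domD[OF D xy(1,2)] mem card_Image_map_prod_singleton[OF f g sub xy(1)] xy(3,4)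
    by (simp add: load_def)
qed

lemma gamma_2t_box_K_le_card:
  assumes "finite A" "finite B" "rook_2dom A B D"
  shows "gamma_2t (box_V (K_V (card A)) (K_V (card B))) (box_adj K_adj K_adj) \<le> card D"
proof -
  obtain f g where f: "bij_betw f A (K_V (card A))" and g: "bij_betw g B (K_V (card B))"
    using ex_bij_betw_finite_nat assms(1,2) unfolding K_V_def by metis
  have "rook_2dom (K_V (card A)) (K_V (card B)) (map_prod f g ` D)"
    using rook_2dom_map_prod[OF assms(3) f g] .
  then have "total_k_dominating (box_V (K_V (card A)) (K_V (card B))) (box_adj K_adj K_adj) 2
      (map_prod f g ` D)"
    by (simp add: total_2dom_box_K_iff_rook_2dom K_V_def)
  moreover have "card (map_prod f g ` D) = card D"
    using f g weighted_rook_2dom_subset[OF assms(3)]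
    by (metis bij_betw_imp_inj_on card_image inj_on_subset map_prod_inj_on)
  ultimately show ?thesis unfolding gamma_2t_def by (metis (mono_tags) Least_le)
qed

lemma load_restrict:
  assumes "a \<in> A" "finite (S `` {a})"
  shows "load (S \<inter> A \<times> B) (\<lambda>a. card (S `` {a} - B)) a = card (S `` {a})"
proof -
  have "(S \<inter> A \<times> B) `` {a} = S `` {a} \<inter> B" using assms(1) by auto
  then show ?thesis using card_Int_Diff[OF assms(2), of B] by (simp add: load_def)
qed

lemma weighted_rook_2dom_restrict:
  assumes S: "rook_2dom X Y S" and fin: "finite X" "finite Y" and AB: "A \<subseteq> X" "B \<subseteq> Y"
  shows "weighted_rook_2dom A B (S \<inter> A \<times> B) (\<lambda>a. card (S `` {a} - B)) (\<lambda>b. card (S\<inverse> `` {b} - A))"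
  unfolding weighted_rook_2dom_def
proof (intro conjI ballI)
  show "S \<inter> A \<times> B \<subseteq> A \<times> B" by blast
  fix a b assume ab: "a \<in> A" "b \<in> B"
  have sub: "S \<subseteq> X \<times> Y" using weighted_rook_2dom_subset[OF S] .
  have "finite (S `` {a})" "finite (S\<inverse> `` {b})"
    using finite_Image_singleton_of_subset[OF sub fin(2)]
      finite_Image_singleton_of_subset[of "S\<inverse>" Y X] sub fin(1) by auto
  moreover have "(S \<inter> A \<times> B)\<inverse> = S\<inverse> \<inter> B \<times> A" by auto
  ultimately have "load (S \<inter> A \<times> B) (\<lambda>a. card (S `` {a} - B)) a = card (S `` {a})"
    "load ((S \<inter> A \<times> B)\<inverse>) (\<lambda>b. card (S\<inverse> `` {b} - A)) b = card (S\<inverse> `` {b})"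
    using load_restrict[OF ab(1)] load_restrict[OF ab(2), of "S\<inverse>" A] by auto
  then show "(if (a, b) \<in> S \<inter> A \<times> B then 4 else 2) \<le>
      load (S \<inter> A \<times> B) (\<lambda>a. card (S `` {a} - B)) a
      + load ((S \<inter> A \<times> B)\<inverse>) (\<lambda>b. card (S\<inverse> `` {b} - A)) b"
    using weighted_rook_2domD[OF S, of a b] ab AB by (auto simp: load_def subset_iff)
qed

lemma weighted_card_restrict:
  assumes "finite A" "finite B" "finite S"
  shows "weighted_card A B (S \<inter> A \<times> B) (\<lambda>a. card (S `` {a} - B)) (\<lambda>b. card (S\<inverse> `` {b} - A))
    = card (S \<inter> (A \<times> UNIV \<union> UNIV \<times> B))"
proof -
  have "(\<Sum>b\<in>B. card (S\<inverse> `` {b} - A)) = card ((S \<inter> (- A) \<times> B)\<inverse>)"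
    using sum_card_Image_Diff[of B "S\<inverse>" A] assms by (simp add: converse_Int converse_Times)
  moreover have "S \<inter> (A \<times> UNIV \<union> UNIV \<times> B) = (S \<inter> A \<times> B) \<union> (S \<inter> A \<times> - B) \<union> (S \<inter> (- A) \<times> B)"
    by auto
  ultimately show ?thesis
    using assms sum_card_Image_Diff[of A S B] unfolding weighted_card_def
    by (simp add: card_Un_disjoint Int_Un_distrib disjoint_iff)
qed

theorem lemma6:
  fixes n m r s :: nat and A B :: "nat set" and S :: "(nat \<times> nat) set"
  assumes "n \<ge> 2" "m \<ge> 2" "2 \<le> r" "r \<le> n" "2 \<le> s" "s \<le> m"
    and "A \<subseteq> K_V n" "card A = r" "B \<subseteq> K_V m" "card B = s"
    and "total_k_dominating (box_V (K_V n) (K_V m)) (box_adj K_adj K_adj) 2 S"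
  shows "card (S \<inter> ((A \<times> K_V m) \<union> (K_V n \<times> B)))
           \<ge> gamma_2t (box_V (K_V r) (K_V s)) (box_adj K_adj K_adj)"
proof -
  have fin: "finite (K_V n)" "finite (K_V m)" "finite A" "finite B"
    using assms(7,9) finite_subset unfolding K_V_def by auto
  have S: "rook_2dom (K_V n) (K_V m) S"
    using assms(11) total_2dom_box_K_iff_rook_2dom[OF fin(1,2)] by blast
  have sub: "S \<subseteq> K_V n \<times> K_V m" using weighted_rook_2dom_subset[OF S] .
  then have "finite S" using fin(1,2) finite_subset by blast
  have "S \<inter> ((A \<times> K_V m) \<union> (K_V n \<times> B)) = S \<inter> (A \<times> UNIV \<union> UNIV \<times> B)" using sub by auto
  then have "rook_2dom_within A B (card (S \<inter> ((A \<times> K_V m) \<union> (K_V n \<times> B))))"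
    using rook_2dom_within_weighted_card[OF weighted_rook_2dom_restrict[OF S fin(1,2) assms(7,9)]]
      weighted_card_restrict[OF fin(3,4) \<open>finite S\<close>] fin(3,4) assms(3,5,8,10) by simp
  then obtain D where "rook_2dom A B D" "card D \<le> card (S \<inter> ((A \<times> K_V m) \<union> (K_V n \<times> B)))"
    unfolding rook_2dom_within_def by blast
  then show ?thesis using gamma_2t_box_K_le_card[OF fin(3,4)] assms(8,10) by fastforce
qed

end
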